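(* Consider an instance of Matroidal Demand Matching with optimum value $\mathrm{OPT}$. For each $\epsilon>0$ there is a feasible solution $M\subseteq E$ with the following properties: (1) $p(M)\ge(1-2\epsilon)\,\mathrm{OPT}$; (2) for each $v\in V$ there is some $M_v\subseteq M$ with $|M_v|\le 1/\epsilon^2$ such that $d_{v,e}\le\epsilon\cdot\big(b_v-\sum_{f\in\delta(v)\cap M_v}d_{v,f}\big)$ for all $e\in\delta(v)\cap(M\setminus M_v)$.
   Context: Matroidal Demand Matching: a graph $G=(V,E)$ (parallel edges allowed) with capacities $b_v\ge0$, for each edge $e=uv$ demands $d_{u,e},d_{v,e}\ge0$ and a profit $p_e\ge0$, and a matroid $\mathcal M=(E,\mathcal I)$; a set $F\subseteq E$ is feasible if $F\in\mathcal I$ and $\sum_{e\in\delta(v)\cap F}d_{v,e}\le b_v$ for all $v\in V$; the goal is to maximize $p(F)=\sum_{e\in F}p_e$ over feasible $F$. $\delta(v)$ is the set of edges incident to $v$. *)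

theory Defs
  imports Complex_Main
begin

definition matroid :: "'e set \<Rightarrow> ('e set \<Rightarrow> bool) \<Rightarrow> bool" where
  "matroid E indep \<longleftrightarrow>
     finite E \<and>
     (\<forall>X. indep X \<longrightarrow> X \<subseteq> E) \<and>
     indep {} \<and>
     (\<forall>X Y. indep X \<and> Y \<subseteq> X \<longrightarrow> indep Y) \<and>
     (\<forall>X Y. indep X \<and> indep Y \<and> card X < card Y \<longrightarrow>
        (\<exists>y\<in>Y - X. indep (insert y X)))"

definition delta :: "'e set \<Rightarrow> ('e \<Rightarrow> 'v) \<Rightarrow> ('e \<Rightarrow> 'v) \<Rightarrow> 'v \<Rightarrow> 'e set" where
  "delta E ep1 ep2 v = {e \<in> E. ep1 e = v \<or> ep2 e = v}"

definition mdm_feasible ::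
  "'v set \<Rightarrow> 'e set \<Rightarrow> ('e \<Rightarrow> 'v) \<Rightarrow> ('e \<Rightarrow> 'v) \<Rightarrow> ('v \<Rightarrow> real) \<Rightarrow>
   ('v \<Rightarrow> 'e \<Rightarrow> real) \<Rightarrow> ('e set \<Rightarrow> bool) \<Rightarrow> 'e set \<Rightarrow> bool" where
  "mdm_feasible V E ep1 ep2 b d indep F \<longleftrightarrow>
     F \<subseteq> E \<and> indep F \<and>
     (\<forall>v\<in>V. (\<Sum>e\<in>delta E ep1 ep2 v \<inter> F. d v e) \<le> b v)"

definition mdm_opt ::
  "'v set \<Rightarrow> 'e set \<Rightarrow> ('e \<Rightarrow> 'v) \<Rightarrow> ('e \<Rightarrow> 'v) \<Rightarrow> ('v \<Rightarrow> real) \<Rightarrow>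
   ('v \<Rightarrow> 'e \<Rightarrow> real) \<Rightarrow> ('e set \<Rightarrow> bool) \<Rightarrow> ('e \<Rightarrow> real) \<Rightarrow> real" where
  "mdm_opt V E ep1 ep2 b d indep p =
     Max {sum p F | F. mdm_feasible V E ep1 ep2 b d indep F}"

end

theory Submission
  imports Defs
begin

text \<open>Start from an optimal solution F and let c = \<lceil>1/\<epsilon>\<rceil>. At each vertex v, list the edges of F
at v by decreasing demand and cut the list into c consecutive blocks of c - 1 edges; by averaging,
some block j carries at most a 1/c share of the profit at v. That block is deleted and the j
blocks before it, at most (c - 1)^2 \<le> 1/\<epsilon>^2 edges, form M_v. An edge e after the deleted block
is no heavier than any of the c - 1 deleted edges, so c * d_e is at most the load of the edges
outside M_v, hence at most the capacity M_v leaves free. Since every edge has two endpoints, the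
deletions cost at most 2/c \<le> 2\<epsilon> of p(F), and feasibility survives because independence and the
capacity constraints are closed under taking subsets.\<close>

lemma sum_list_take_drop:
  "sum_list (map f (take n xs)) + sum_list (map f (drop n xs)) = sum_list (map f xs)"
  by (simp flip: sum_list_append map_append)

lemma sum_list_take_blocks:
  "(\<Sum>j<n. sum_list (map f (take k (drop (j * k) xs)))) = sum_list (map f (take (n * k) xs))"
proof (induction n)
  case (Suc n)
  have "take (Suc n * k) xs = take (n * k) xs @ take k (drop (n * k) xs)"
    by (metis add.commute mult_Suc take_add)
  then show ?case using Suc by simp
qed simp

lemma exists_le_average:
  fixes a :: "nat \<Rightarrow> real"
  assumes "c \<ge> 1"
  shows "\<exists>j<c. real c * a j \<le> (\<Sum>i<c. a i)"
proof (rule ccontr)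
  assume "\<not> ?thesis"
  then have "(\<Sum>j<c. \<Sum>i<c. a i) < (\<Sum>j<c. real c * a j)"
    using assms by (intro sum_strict_mono) (auto simp: lessThan_empty_iff)
  then show False by (simp add: sum_distrib_left)
qed

lemma exists_cheap_block:
  fixes p :: "'a \<Rightarrow> real"
  assumes "\<And>x. x \<in> set xs \<Longrightarrow> p x \<ge> 0" and "c \<ge> 1"
  shows "\<exists>j<c. real c * sum_list (map p (take k (drop (j * k) xs))) \<le> sum_list (map p xs)"
proof -
  obtain j where "j < c"
    and cheap: "real c * sum_list (map p (take k (drop (j * k) xs)))
                  \<le> (\<Sum>i<c. sum_list (map p (take k (drop (i * k) xs))))"
    using exists_le_average[OF assms(2), of "\<lambda>i. sum_list (map p (take k (drop (i * k) xs)))"]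
    by blast
  have "(\<Sum>i<c. sum_list (map p (take k (drop (i * k) xs)))) = sum_list (map p (take (c * k) xs))"
    by (rule sum_list_take_blocks)
  also have "\<dots> \<le> sum_list (map p xs)"
  proof -
    have "0 \<le> sum_list (map p (drop (c * k) xs))"
      using assms(1) by (intro sum_list_nonneg) (auto dest: in_set_dropD)
    then show ?thesis using sum_list_take_drop[of p "c * k" xs] by linarith
  qed
  finally show ?thesis using \<open>j < c\<close> cheap by force
qed

lemma sorted_descending_tail_le:
  fixes d :: "'a \<Rightarrow> real"
  assumes "sorted_wrt (\<lambda>x y. d y \<le> d x) xs" and "\<And>x. x \<in> set xs \<Longrightarrow> d x \<ge> 0"
    and "e \<in> set (drop k xs)"
  shows "real (k + 1) * d e \<le> sum_list (map d xs)"
proof -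
  have "k < length xs" using assms(3) by (cases "k < length xs") auto
  then have "real k * d e = sum_list (map (\<lambda>_. d e) (take k xs))"
    by (simp add: sum_list_triv)
  also have "\<dots> \<le> sum_list (map d (take k xs))"
  proof (rule sum_list_mono)
    have "\<forall>x\<in>set (take k xs). \<forall>y\<in>set (drop k xs). d y \<le> d x"
      using assms(1) sorted_wrt_append[of "\<lambda>x y. d y \<le> d x" "take k xs" "drop k xs"] by simp
    then show "d e \<le> d x" if "x \<in> set (take k xs)" for x using that assms(3) by blast
  qed
  finally have "real k * d e \<le> sum_list (map d (take k xs))" .
  moreover have "d e \<le> sum_list (map d (drop k xs))"
    using assms(2,3) by (intro member_le_sum_list) (auto dest: in_set_dropD)
  ultimately show ?thesis
    using sum_list_take_drop[of d k xs] by (simp add: algebra_simps)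
qed

lemma exists_prefix_and_cheap_block:
  fixes d p :: "'a \<Rightarrow> real"
  assumes "finite S" and "\<And>x. x \<in> S \<Longrightarrow> d x \<ge> 0" and "\<And>x. x \<in> S \<Longrightarrow> p x \<ge> 0"
    and "c \<ge> 1"
  shows "\<exists>P R. P \<subseteq> S \<and> R \<subseteq> S \<and> card P \<le> (c - 1)\<^sup>2 \<and> real c * sum p R \<le> sum p S \<and>
           (\<forall>e \<in> S - P - R. real c * d e \<le> sum d (S - P))"
proof -
  obtain ys where ys: "set ys = S" "distinct ys" using finite_distinct_list[OF assms(1)] by blast
  define xs where "xs = sort_key (\<lambda>x. - d x) ys"
  have xs: "set xs = S" "distinct xs" "sorted_wrt (\<lambda>x y. d y \<le> d x) xs"
    using ys sorted_sort_key[of "\<lambda>x. - d x" ys] unfolding xs_def sorted_map by auto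
  define k where "k = c - 1"
  have "\<And>x. x \<in> set xs \<Longrightarrow> p x \<ge> 0" using assms(3) xs(1) by blast
  then obtain j where "j < c"
    and j: "real c * sum_list (map p (take k (drop (j * k) xs))) \<le> sum_list (map p xs)"
    using exists_cheap_block[OF _ assms(4), of xs p k] by blast
  define P where "P = set (take (j * k) xs)"
  define R where "R = set (take k (drop (j * k) xs))"
  have "card P \<le> j * k" unfolding P_def using card_length[of "take (j * k) xs"] by simp
  also have "\<dots> \<le> (c - 1)\<^sup>2" using \<open>j < c\<close> unfolding k_def power2_eq_square by (intro mult_le_mono1) simp
  finally have card_P: "card P \<le> (c - 1)\<^sup>2" .
  have S_split: "S = P \<union> set (drop (j * k) xs)"
    unfolding P_def xs(1)[symmetric] by (simp flip: set_append)
  moreover have "P \<inter> set (drop (j * k) xs) = {}"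
    unfolding P_def using set_take_disj_set_drop_if_distinct[OF xs(2)] by simp
  ultimately have rest: "S - P = set (drop (j * k) xs)" by blast
  have rest_split: "set (drop (j * k) xs) = R \<union> set (drop k (drop (j * k) xs))"
    unfolding R_def by (simp only: set_append[symmetric] append_take_drop_id)
  have cheap: "real c * sum p R \<le> sum p S"
    using j xs(1,2) unfolding R_def by (simp add: sum_list_distinct_conv_sum_set)
  have light: "\<forall>e \<in> S - P - R. real c * d e \<le> sum d (S - P)"
  proof
    fix e assume "e \<in> S - P - R"
    then have "e \<in> set (drop k (drop (j * k) xs))"
      using rest rest_split by blast
    then have "real (k + 1) * d e \<le> sum_list (map d (drop (j * k) xs))"
      using xs(3) assms(2) by (intro sorted_descending_tail_le) (auto simp: xs(1)[symmetric] dest: in_set_dropD)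
    then show "real c * d e \<le> sum d (S - P)"
      using rest xs(2) assms(4) unfolding k_def by (simp add: sum_list_distinct_conv_sum_set)
  qed
  show ?thesis
  proof (intro exI conjI)
    show "P \<subseteq> S" using S_split by blast
    show "R \<subseteq> S" using S_split rest_split by blast
  qed (fact card_P cheap light)+
qed

lemma sum_UN_le:
  fixes f :: "'a \<Rightarrow> real"
  assumes "finite I" and "\<And>i. i \<in> I \<Longrightarrow> finite (A i)"
    and "\<And>i x. i \<in> I \<Longrightarrow> x \<in> A i \<Longrightarrow> f x \<ge> 0"
  shows "sum f (\<Union>i\<in>I. A i) \<le> (\<Sum>i\<in>I. sum f (A i))"
  using assms
proof (induction I rule: finite_induct)
  case (insert i I)
  have "sum f (A i \<union> (\<Union>j\<in>I. A j))
          = sum f (A i) + sum f (\<Union>j\<in>I. A j) - sum f (A i \<inter> (\<Union>j\<in>I. A j))"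
    using insert by (intro sum_Un) auto
  moreover have "sum f (A i \<inter> (\<Union>j\<in>I. A j)) \<ge> 0"
    using insert.prems by (intro sum_nonneg) auto
  moreover have "sum f (\<Union>j\<in>I. A j) \<le> (\<Sum>j\<in>I. sum f (A j))"
    using insert.prems by (intro insert.IH) auto
  ultimately show ?case using insert by simp
qed simp

lemma sum_diff_UN_ge:
  fixes f :: "'a \<Rightarrow> real"
  assumes "finite I" and "finite F" and "\<And>i. i \<in> I \<Longrightarrow> A i \<subseteq> F"
    and "\<And>x. x \<in> F \<Longrightarrow> f x \<ge> 0"
  shows "sum f F - (\<Sum>i\<in>I. sum f (A i)) \<le> sum f (F - (\<Union>i\<in>I. A i))"
proof -
  have "sum f (\<Union>i\<in>I. A i) \<le> (\<Sum>i\<in>I. sum f (A i))"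
    using assms by (intro sum_UN_le) (auto intro: finite_subset)
  moreover have "sum f F = sum f (F - (\<Union>i\<in>I. A i)) + sum f (\<Union>i\<in>I. A i)"
    using assms(2,3) by (intro sum.subset_diff) auto
  ultimately show ?thesis by linarith
qed

lemma residual_capacity_bound:
  fixes d :: "'a \<Rightarrow> real"
  assumes "finite S" and "P \<subseteq> S" and "Q \<subseteq> P" and "\<And>x. x \<in> S \<Longrightarrow> d x \<ge> 0"
    and "sum d S \<le> B" and "y \<le> sum d (S - P)"
  shows "y \<le> B - sum d Q"
proof -
  have "sum d (S - P) = sum d S - sum d P" using assms(1,2) by (rule sum_diff)
  moreover have "sum d Q \<le> sum d P"
    using assms(1-4) by (intro sum_mono2) (auto intro: finite_subset)
  ultimately show ?thesis using assms(5,6) by linarith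
qed

lemma sum_delta_inter:
  fixes p :: "'e \<Rightarrow> real"
  assumes "finite V" and "finite F" and "F \<subseteq> E"
    and "\<And>e. e \<in> E \<Longrightarrow> ep1 e \<in> V \<and> ep2 e \<in> V \<and> ep1 e \<noteq> ep2 e"
  shows "(\<Sum>v\<in>V. sum p (delta E ep1 ep2 v \<inter> F)) = 2 * sum p F"
proof -
  let ?at = "\<lambda>e v. ep1 e = v \<or> ep2 e = v"
  have "delta E ep1 ep2 v \<inter> F = {e \<in> F. ?at e v}" for v
    using assms(3) unfolding delta_def by auto
  then have "(\<Sum>v\<in>V. sum p (delta E ep1 ep2 v \<inter> F)) = (\<Sum>v\<in>V. \<Sum>e\<in>F. if ?at e v then p e else 0)"
    by (simp add: sum.inter_filter[OF assms(2)])
  also have "\<dots> = (\<Sum>e\<in>F. \<Sum>v\<in>V. if ?at e v then p e else 0)"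
    by (rule sum.swap)
  also have "\<dots> = (\<Sum>e\<in>F. 2 * p e)"
  proof (intro sum.cong refl)
    fix e assume "e \<in> F"
    then have ends: "ep1 e \<in> V" "ep2 e \<in> V" "ep1 e \<noteq> ep2 e" using assms(3,4) by auto
    then have "{v \<in> V. ?at e v} = {ep1 e, ep2 e}" by auto
    then show "(\<Sum>v\<in>V. if ?at e v then p e else 0) = 2 * p e"
      using ends by (simp add: sum.inter_filter[OF assms(1), symmetric])
  qed
  finally show ?thesis by (simp add: sum_distrib_left)
qed

lemma mdm_feasible_subset:
  assumes "matroid E indep" and "\<And>v e. v \<in> V \<Longrightarrow> e \<in> E \<Longrightarrow> d v e \<ge> 0"
    and "mdm_feasible V E ep1 ep2 b d indep F" and "G \<subseteq> F"
  shows "mdm_feasible V E ep1 ep2 b d indep G"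
  unfolding mdm_feasible_def
proof (intro conjI ballI)
  have "F \<subseteq> E" "indep F" using assms(3) unfolding mdm_feasible_def by auto
  then show "G \<subseteq> E" "indep G" using assms(1,4) unfolding matroid_def by auto
  fix v assume "v \<in> V"
  have "(\<Sum>e\<in>delta E ep1 ep2 v \<inter> G. d v e) \<le> (\<Sum>e\<in>delta E ep1 ep2 v \<inter> F. d v e)"
    using assms(1,2,4) \<open>v \<in> V\<close> \<open>F \<subseteq> E\<close> unfolding matroid_def
    by (intro sum_mono2) (auto intro: finite_subset)
  also have "\<dots> \<le> b v" using assms(3) \<open>v \<in> V\<close> unfolding mdm_feasible_def by blast
  finally show "(\<Sum>e\<in>delta E ep1 ep2 v \<inter> G. d v e) \<le> b v" .
qed

lemma mdm_opt_attained:
  assumes "matroid E indep" and "\<And>v. v \<in> V \<Longrightarrow> b v \<ge> 0"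
  shows "\<exists>F. mdm_feasible V E ep1 ep2 b d indep F \<and> sum p F = mdm_opt V E ep1 ep2 b d indep p"
proof -
  let ?vals = "{sum p F | F. mdm_feasible V E ep1 ep2 b d indep F}"
  have "?vals \<subseteq> sum p ` Pow E" unfolding mdm_feasible_def by blast
  moreover have "finite E" using assms(1) unfolding matroid_def by blast
  ultimately have "finite ?vals" by (meson finite_Pow_iff finite_imageI finite_subset)
  moreover have "mdm_feasible V E ep1 ep2 b d indep {}"
    using assms unfolding matroid_def mdm_feasible_def by simp
  ultimately have "Max ?vals \<in> ?vals" by (intro Max_in) blast+
  then show ?thesis unfolding mdm_opt_def by auto
qed

lemma mdm_truncation:
  fixes p :: "'e \<Rightarrow> real" and c :: nat
  assumes "finite V" and "\<And>e. e \<in> E \<Longrightarrow> ep1 e \<in> V \<and> ep2 e \<in> V \<and> ep1 e \<noteq> ep2 e"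
    and d_nonneg: "\<And>v e. v \<in> V \<Longrightarrow> e \<in> E \<Longrightarrow> d v e \<ge> 0"
    and p_nonneg: "\<And>e. e \<in> E \<Longrightarrow> p e \<ge> 0"
    and "matroid E indep" and F: "mdm_feasible V E ep1 ep2 b d indep F" and "c \<ge> 1"
  shows "\<exists>M. mdm_feasible V E ep1 ep2 b d indep M \<and>
           (real c - 2) * sum p F \<le> real c * sum p M \<and>
           (\<forall>v\<in>V. \<exists>Mv. Mv \<subseteq> M \<and> card Mv \<le> (c - 1)\<^sup>2 \<and>
              (\<forall>e\<in>delta E ep1 ep2 v \<inter> (M - Mv).
                 real c * d v e \<le> b v - (\<Sum>f\<in>delta E ep1 ep2 v \<inter> Mv. d v f)))"
proof -
  define S where "S v = delta E ep1 ep2 v \<inter> F" for v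
  have "F \<subseteq> E" and load: "\<And>v. v \<in> V \<Longrightarrow> sum (d v) (S v) \<le> b v"
    using F unfolding mdm_feasible_def S_def by auto
  moreover have "finite E" using assms(5) unfolding matroid_def by blast
  ultimately have "finite F" by (blast intro: finite_subset)
  have S_sub: "S v \<subseteq> F" for v unfolding S_def by blast
  then have S_sub_E: "x \<in> S v \<Longrightarrow> x \<in> E" for v x using \<open>F \<subseteq> E\<close> by blast
  have S_finite: "finite (S v)" for v using S_sub \<open>finite F\<close> by (rule finite_subset)
  have "\<exists>P R. P \<subseteq> S v \<and> R \<subseteq> S v \<and> card P \<le> (c - 1)\<^sup>2 \<and>
          real c * sum p R \<le> sum p (S v) \<and> (\<forall>e \<in> S v - P - R. real c * d v e \<le> sum (d v) (S v - P))"
    if "v \<in> V" for v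
    using S_finite S_sub_E d_nonneg[OF that] p_nonneg \<open>c \<ge> 1\<close>
    by (intro exists_prefix_and_cheap_block) blast+
  then obtain P R where P: "\<And>v. v \<in> V \<Longrightarrow> P v \<subseteq> S v \<and> card (P v) \<le> (c - 1)\<^sup>2"
    and R: "\<And>v. v \<in> V \<Longrightarrow> R v \<subseteq> S v \<and> real c * sum p (R v) \<le> sum p (S v)"
    and light: "\<And>v e. v \<in> V \<Longrightarrow> e \<in> S v - P v - R v \<Longrightarrow> real c * d v e \<le> sum (d v) (S v - P v)"
    by metis
  define M where "M = F - (\<Union>v\<in>V. R v)"
  have "sum p F - (\<Sum>v\<in>V. sum p (R v)) \<le> sum p M"
    unfolding M_def using assms(1) \<open>finite F\<close> R S_sub \<open>F \<subseteq> E\<close> p_nonneg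
    by (intro sum_diff_UN_ge) blast+
  then have "real c * (sum p F - (\<Sum>v\<in>V. sum p (R v))) \<le> real c * sum p M"
    by (rule mult_left_mono) simp
  moreover have "real c * (\<Sum>v\<in>V. sum p (R v)) \<le> (\<Sum>v\<in>V. sum p (S v))"
    using R by (simp add: sum_distrib_left sum_mono)
  moreover have "(\<Sum>v\<in>V. sum p (S v)) = 2 * sum p F"
    unfolding S_def by (rule sum_delta_inter[OF assms(1) \<open>finite F\<close> \<open>F \<subseteq> E\<close> assms(2)])
  ultimately have "(real c - 2) * sum p F \<le> real c * sum p M" by (simp add: algebra_simps)
  moreover have "mdm_feasible V E ep1 ep2 b d indep M"
    using assms(5) d_nonneg F by (rule mdm_feasible_subset) (auto simp: M_def)
  moreover have "\<exists>Mv. Mv \<subseteq> M \<and> card Mv \<le> (c - 1)\<^sup>2 \<and>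
              (\<forall>e\<in>delta E ep1 ep2 v \<inter> (M - Mv).
                 real c * d v e \<le> b v - (\<Sum>f\<in>delta E ep1 ep2 v \<inter> Mv. d v f))"
    if "v \<in> V" for v
  proof (intro exI[of _ "P v \<inter> M"] conjI ballI)
    have "P v \<subseteq> S v" "card (P v) \<le> (c - 1)\<^sup>2" using P[OF that] by auto
    have "card (P v \<inter> M) \<le> card (P v)"
      using \<open>P v \<subseteq> S v\<close> S_finite by (intro card_mono) (auto intro: finite_subset)
    then show "card (P v \<inter> M) \<le> (c - 1)\<^sup>2" using \<open>card (P v) \<le> (c - 1)\<^sup>2\<close> by linarith
    fix e assume "e \<in> delta E ep1 ep2 v \<inter> (M - P v \<inter> M)"
    then have "e \<in> S v - P v - R v" using that unfolding S_def M_def by blast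
    then have "real c * d v e \<le> sum (d v) (S v - P v)" by (rule light[OF that])
    then show "real c * d v e \<le> b v - (\<Sum>f\<in>delta E ep1 ep2 v \<inter> (P v \<inter> M). d v f)"
      using S_finite \<open>P v \<subseteq> S v\<close> load[OF that]
      by (intro residual_capacity_bound[of "S v" "P v"]) (auto intro: d_nonneg[OF that] S_sub_E)
  qed simp
  ultimately show ?thesis by blast
qed

lemma exists_nat_inverse_approx:
  fixes \<epsilon> :: real
  assumes "\<epsilon> > 0"
  shows "\<exists>c::nat. c \<ge> 1 \<and> 1 \<le> \<epsilon> * real c \<and> real ((c - 1)\<^sup>2) \<le> 1 / \<epsilon>\<^sup>2"
proof (intro exI conjI)
  define c where "c = nat \<lceil>1 / \<epsilon>\<rceil>"
  have "0 < 1 / \<epsilon>" using assms by simp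
  then have "0 \<le> \<lceil>1 / \<epsilon>\<rceil>" unfolding zero_le_ceiling by linarith
  then have "real c = of_int \<lceil>1 / \<epsilon>\<rceil>" unfolding c_def by simp
  then have "1 / \<epsilon> \<le> real c" "real c < 1 / \<epsilon> + 1"
    using ceiling_correct[of "1 / \<epsilon>"] by linarith+
  then show "1 \<le> \<epsilon> * real c" using assms by (simp add: field_simps)
  have "real c > 0" using \<open>0 < 1 / \<epsilon>\<close> \<open>1 / \<epsilon> \<le> real c\<close> by linarith
  then show "c \<ge> 1" by simp
  then have "real ((c - 1)\<^sup>2) = (real c - 1)\<^sup>2" by (simp add: of_nat_diff)
  also have "\<dots> \<le> (1 / \<epsilon>)\<^sup>2"
    using \<open>real c < 1 / \<epsilon> + 1\<close> \<open>c \<ge> 1\<close> by (intro power_mono) auto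
  finally show "real ((c - 1)\<^sup>2) \<le> 1 / \<epsilon>\<^sup>2" by (simp add: power_divide)
qed

lemma le_mult_of_scaled_le:
  fixes x y \<epsilon> c :: real
  assumes "1 \<le> \<epsilon> * c" and "\<epsilon> \<ge> 0" and "x \<ge> 0" and "c * x \<le> y"
  shows "x \<le> \<epsilon> * y"
proof -
  have "x \<le> (\<epsilon> * c) * x" using assms(1,3) by (simp add: mult_le_cancel_right1)
  also have "\<dots> = \<epsilon> * (c * x)" by simp
  also have "\<dots> \<le> \<epsilon> * y" using assms(2,4) by (rule mult_left_mono[rotated])
  finally show ?thesis .
qed

lemma scaled_loss_bound:
  fixes x y \<epsilon> c :: real
  assumes "1 \<le> \<epsilon> * c" and "c > 0" and "x \<ge> 0" and "(c - 2) * x \<le> c * y"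
  shows "(1 - 2 * \<epsilon>) * x \<le> y"
proof -
  have "1 / c \<le> \<epsilon>" using assms(1,2) by (simp add: field_simps)
  then have "(1 - 2 * \<epsilon>) * x \<le> (1 - 2 / c) * x"
    using assms(3) by (intro mult_right_mono) auto
  also have "\<dots> = (c - 2) * x / c" using assms(2) by (simp add: field_simps)
  also have "\<dots> \<le> y" using assms(2,4) by (simp add: divide_le_eq mult.commute)
  finally show ?thesis .
qed

theorem lemma9:
  fixes V :: "'v set" and E :: "'e set" and ep1 ep2 :: "'e \<Rightarrow> 'v"
    and b :: "'v \<Rightarrow> real" and d :: "'v \<Rightarrow> 'e \<Rightarrow> real" and p :: "'e \<Rightarrow> real"
    and indep :: "'e set \<Rightarrow> bool" and \<epsilon> :: real
  assumes "finite V" and "finite E"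
    and "\<And>e. e \<in> E \<Longrightarrow> ep1 e \<in> V \<and> ep2 e \<in> V \<and> ep1 e \<noteq> ep2 e"
    and "\<And>v. v \<in> V \<Longrightarrow> b v \<ge> 0"
    and "\<And>v e. v \<in> V \<Longrightarrow> e \<in> E \<Longrightarrow> d v e \<ge> 0"
    and "\<And>e. e \<in> E \<Longrightarrow> p e \<ge> 0"
    and "matroid E indep"
    and "\<epsilon> > 0"
  shows "\<exists>M. mdm_feasible V E ep1 ep2 b d indep M \<and>
           sum p M \<ge> (1 - 2 * \<epsilon>) * mdm_opt V E ep1 ep2 b d indep p \<and>
           (\<forall>v\<in>V. \<exists>Mv. Mv \<subseteq> M \<and> real (card Mv) \<le> 1 / \<epsilon>\<^sup>2 \<and>
              (\<forall>e\<in>delta E ep1 ep2 v \<inter> (M - Mv).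
                 d v e \<le> \<epsilon> * (b v - (\<Sum>f\<in>delta E ep1 ep2 v \<inter> Mv. d v f))))"
proof -
  obtain c :: nat where "c \<ge> 1" and scale: "1 \<le> \<epsilon> * real c" and card: "real ((c - 1)\<^sup>2) \<le> 1 / \<epsilon>\<^sup>2"
    using exists_nat_inverse_approx[OF assms(8)] by blast
  obtain F where F: "mdm_feasible V E ep1 ep2 b d indep F"
    and opt: "sum p F = mdm_opt V E ep1 ep2 b d indep p"
    using mdm_opt_attained[of E indep V b ep1 ep2 d p] assms(7,4) by blast
  obtain M where "mdm_feasible V E ep1 ep2 b d indep M"
    and profit: "(real c - 2) * sum p F \<le> real c * sum p M"
    and local: "\<forall>v\<in>V. \<exists>Mv. Mv \<subseteq> M \<and> card Mv \<le> (c - 1)\<^sup>2 \<and>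
              (\<forall>e\<in>delta E ep1 ep2 v \<inter> (M - Mv).
                 real c * d v e \<le> b v - (\<Sum>f\<in>delta E ep1 ep2 v \<inter> Mv. d v f))"
    using mdm_truncation[of V E ep1 ep2 d p indep b F c] assms(1,3,5,6,7) F \<open>c \<ge> 1\<close> by blast
  have "sum p F \<ge> 0"
    using F assms(6) unfolding mdm_feasible_def by (intro sum_nonneg) auto
  show ?thesis
  proof (rule exI[of _ M], intro conjI ballI)
    show "mdm_feasible V E ep1 ep2 b d indep M" by fact
    show "(1 - 2 * \<epsilon>) * mdm_opt V E ep1 ep2 b d indep p \<le> sum p M"
      unfolding opt[symmetric] using scale \<open>c \<ge> 1\<close> \<open>sum p F \<ge> 0\<close> profit
      by (intro scaled_loss_bound[of \<epsilon> "real c"]) auto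
    fix v assume "v \<in> V"
    then obtain Mv where "Mv \<subseteq> M" and "card Mv \<le> (c - 1)\<^sup>2"
      and light: "\<forall>e\<in>delta E ep1 ep2 v \<inter> (M - Mv).
                   real c * d v e \<le> b v - (\<Sum>f\<in>delta E ep1 ep2 v \<inter> Mv. d v f)"
      using local by blast
    have "real (card Mv) \<le> 1 / \<epsilon>\<^sup>2"
      using \<open>card Mv \<le> (c - 1)\<^sup>2\<close> card of_nat_le_iff[of "card Mv"] by linarith
    moreover have "d v e \<le> \<epsilon> * (b v - (\<Sum>f\<in>delta E ep1 ep2 v \<inter> Mv. d v f))"
      if "e \<in> delta E ep1 ep2 v \<inter> (M - Mv)" for e
    proof (rule le_mult_of_scaled_le[OF scale less_imp_le[OF assms(8)]])
      show "d v e \<ge> 0" using that assms(5)[OF \<open>v \<in> V\<close>] unfolding delta_def by blast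
      show "real c * d v e \<le> b v - (\<Sum>f\<in>delta E ep1 ep2 v \<inter> Mv. d v f)" using that light by blast
    qed
    ultimately show "\<exists>Mv. Mv \<subseteq> M \<and> real (card Mv) \<le> 1 / \<epsilon>\<^sup>2 \<and>
            (\<forall>e\<in>delta E ep1 ep2 v \<inter> (M - Mv).
               d v e \<le> \<epsilon> * (b v - (\<Sum>f\<in>delta E ep1 ep2 v \<inter> Mv. d v f)))"
      using \<open>Mv \<subseteq> M\<close> by blast
  qed
qed

end
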